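(* Under the standing assumptions below, for every $\eta\in\Theta$, $$|LW(\eta)|\le\mathbf b\langle h\rangle+2W(\eta)<\infty,$$ where $\langle h\rangle=\int_{\mathbb R^d}h(x)dx$.
   Context: Fix $d\in\mathbb N$, $\varepsilon>0$, $G(x)=(1+|x|)^{-d-\varepsilon}$. $\Gamma$ is the set of locally finite subsets of $\mathbb R^d$; $\Gamma_G=\{\gamma\in\Gamma:\sum_{x\in\gamma}G(x)<\infty\}$. Let $b:\mathbb R^d\times\Gamma_G\to[0,\infty)$ be measurable with $\mathbf b:=\sup_{x,\eta}b(x,\eta)<\infty$. The operator $L$ acts on functions $F$ on configurations by $$LF(\eta)=\sum_{x\in\eta}\bigl(F(\eta\setminus\{x\})-F(\eta)\bigr)+\int_{\mathbb R^d}b(x,\eta)\bigl(F(\eta\cup\{x\})-F(\eta)\bigr)dx.$$ Let $K:(0,\infty)\to(0,\infty)$ be non-increasing with $\lim_{q\to0+}K(q)=\infty$ and $\int_r^\infty K(q)q^{d-1}dq<\infty$ for every $r>0$. Let $\phi,h:\mathbb R^d\to(0,\infty)$ be measurable, separated from $0$ on every compact set, with $C_1:=\sup_{x}\int_{\mathbb R^d}\phi(y)K(|x-y|)dy<\infty$ and $2C_1\mathbf b\,\phi(x)\le h(x)\le G(x)$ for all $x$. Set $\psi(x,y)=\phi(x)\phi(y)K(|x-y|)$ ($x\ne y$), $V(\eta)=\sum_{\{x,y\}\subset\eta}\psi(x,y)$ (sum over unordered pairs of distinct points), $\langle h,\eta\rangle=\sum_{x\in\eta}h(x)$, $W(\eta)=\langle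 h,\eta\rangle+V(\eta)\in[0,\infty]$, and $\Theta=\{\eta\in\Gamma_G:V(\eta)<\infty\}$. *)

theory Defs
  imports "HOL-Analysis.Analysis"
begin

text \<open>Points of R^d are elements of a Euclidean space 'a, d = DIM('a).
  Configurations are sets of points.\<close>

definition G_weight :: "real \<Rightarrow> 'a::euclidean_space \<Rightarrow> real" where
  "G_weight \<epsilon> x = (1 + norm x) powr (- (real DIM('a) + \<epsilon>))"

definition locally_finite_conf :: "'a::euclidean_space set \<Rightarrow> bool" where
  "locally_finite_conf \<eta> \<longleftrightarrow> (\<forall>B. bounded B \<longrightarrow> finite (\<eta> \<inter> B))"

definition GammaG :: "real \<Rightarrow> 'a::euclidean_space set set" where
  "GammaG \<epsilon> = {\<eta>. locally_finite_conf \<eta> \<and>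
      (\<Sum>\<^sub>\<infinity>x\<in>\<eta>. ennreal (G_weight \<epsilon> x)) < \<infinity>}"

definition GammaG_M :: "real \<Rightarrow> 'a::euclidean_space set measure" where
  "GammaG_M \<epsilon> = sigma (GammaG \<epsilon>)
     {{\<eta> \<in> GammaG \<epsilon>. card (\<eta> \<inter> B) = n} | B n. B \<in> sets borel \<and> bounded B}"

definition psi :: "('a::euclidean_space \<Rightarrow> real) \<Rightarrow> (real \<Rightarrow> real) \<Rightarrow> 'a \<Rightarrow> 'a \<Rightarrow> real" where
  "psi \<phi> K x y = \<phi> x * \<phi> y * K (dist x y)"

text \<open>Sum over unordered pairs of distinct points = half the sum over ordered pairs
  (psi is symmetric).\<close>
definition Vfun :: "('a::euclidean_space \<Rightarrow> real) \<Rightarrow> (real \<Rightarrow> real) \<Rightarrow> 'a set \<Rightarrow> ennreal" where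
  "Vfun \<phi> K \<eta> = (1/2) * (\<Sum>\<^sub>\<infinity>(x,y)\<in>{(x,y). x \<in> \<eta> \<and> y \<in> \<eta> \<and> x \<noteq> y}. ennreal (psi \<phi> K x y))"

definition pair_h :: "('a \<Rightarrow> real) \<Rightarrow> 'a set \<Rightarrow> ennreal" where
  "pair_h h \<eta> = (\<Sum>\<^sub>\<infinity>x\<in>\<eta>. ennreal (h x))"

definition Wfun :: "('a::euclidean_space \<Rightarrow> real) \<Rightarrow> ('a \<Rightarrow> real) \<Rightarrow> (real \<Rightarrow> real) \<Rightarrow> 'a set \<Rightarrow> ennreal" where
  "Wfun h \<phi> K \<eta> = pair_h h \<eta> + Vfun \<phi> K \<eta>"

definition Theta :: "real \<Rightarrow> ('a::euclidean_space \<Rightarrow> real) \<Rightarrow> (real \<Rightarrow> real) \<Rightarrow> 'a set set" where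
  "Theta \<epsilon> \<phi> K = {\<eta> \<in> GammaG \<epsilon>. Vfun \<phi> K \<eta> < \<infinity>}"

text \<open>The generator L applied to a real-valued function F at \<eta>, and the condition
  that both the sum (unconditional = absolute for reals) and the Lebesgue integral
  exist.\<close>
definition Lop :: "('a::euclidean_space \<Rightarrow> 'a set \<Rightarrow> real) \<Rightarrow> ('a set \<Rightarrow> real) \<Rightarrow> 'a set \<Rightarrow> real" where
  "Lop b F \<eta> = (\<Sum>\<^sub>\<infinity>x\<in>\<eta>. F (\<eta> - {x}) - F \<eta>)
      + (\<integral>x. b x \<eta> * (F (insert x \<eta>) - F \<eta>) \<partial>lborel)"

definition Lop_defined :: "('a::euclidean_space \<Rightarrow> 'a set \<Rightarrow> real) \<Rightarrow> ('a set \<Rightarrow> real) \<Rightarrow> 'a set \<Rightarrow> bool" where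
  "Lop_defined b F \<eta> \<longleftrightarrow> (\<lambda>x. F (\<eta> - {x}) - F \<eta>) summable_on \<eta>
      \<and> integrable lborel (\<lambda>x. b x \<eta> * (F (insert x \<eta>) - F \<eta>))"

end

theory Submission
  imports Defs
begin

text \<open>
  Deleting a point \<open>x\<close> of \<open>\<eta>\<close> lowers \<open>W\<close> by \<open>h x\<close> plus the sum of \<open>\<psi>(x,y)\<close> over
  the other points \<open>y\<close>; summed over \<open>x\<close> this is \<open>\<langle>h,\<eta>\<rangle> + 2 V \<eta> \<le> 2 W \<eta>\<close>, which bounds
  the death part of \<open>L W\<close>. Adding a point \<open>x\<close> raises \<open>W\<close> by \<open>h x\<close> plus the sum of
  \<open>\<psi>(x,y)\<close> over \<open>y \<in> \<eta>\<close>. This gain is finite for every \<open>x\<close>: by compactness of the unit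
  sphere, finitely many points \<open>z\<close> of \<open>\<eta>\<close> are such that every far point \<open>y\<close> of \<open>\<eta>\<close> is
  closer to one of them than to \<open>x\<close>, so, \<open>K\<close> being non-increasing, the sum is dominated by
  finitely many of the sums of \<open>\<psi>(z,y)\<close> over \<open>y \<noteq> z\<close>, all of which are at most \<open>2 V \<eta>\<close>.
  Integrated over \<open>x\<close>, the gain is at most \<open>\<langle>h\<rangle> + C\<^sub>1 \<Sum>\<^sub>y\<^sub>\<in>\<^sub>\<eta> \<phi> y\<close>, and
  \<open>C\<^sub>1 b \<phi> \<le> h\<close> (for the supremum \<open>b\<close> of the birth rate) bounds the birth part by
  \<open>b \<langle>h\<rangle> + \<langle>h,\<eta>\<rangle>\<close>. Finally \<open>\<langle>h\<rangle> \<le> \<langle>G\<rangle> < \<infinity>\<close>, by comparing \<open>G\<close> with a weighted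
  sum of indicators of the balls of radius \<open>2^k\<close>.
\<close>

section \<open>Unordered sums of extended nonnegative reals\<close>

lemma summable_on_ennreal_valued [simp]: "(f :: 'a \<Rightarrow> ennreal) summable_on A"
  by (simp add: nonneg_summable_on_complete)

lemma infsum_sum_ennreal:
  fixes g :: "'i \<Rightarrow> 'a \<Rightarrow> ennreal"
  assumes "finite I"
  shows "(\<Sum>\<^sub>\<infinity>y\<in>A. \<Sum>i\<in>I. g i y) = (\<Sum>i\<in>I. \<Sum>\<^sub>\<infinity>y\<in>A. g i y)"
  using assms by (induction I rule: finite_induct) (simp_all add: infsum_add)

lemma infsum_cmult_right_ennreal:
  fixes f :: "'a \<Rightarrow> ennreal"
  assumes "c < \<infinity>"
  shows "(\<Sum>\<^sub>\<infinity>y\<in>A. c * f y) = c * infsum f A"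
proof -
  have "infsum ((*) c \<circ> f) A = c * infsum f A"
  proof (rule infsum_comm_additive_general)
    show "isCont ((*) c) (infsum f A)"
      unfolding isCont_def
      by (rule ennreal_tendsto_cmult) (use assms in \<open>simp_all add: infinity_ennreal_def\<close>)
  qed (auto simp: sum_distrib_left)
  then show ?thesis by (simp add: o_def)
qed

lemma has_sum_enn2real:
  fixes f :: "'a \<Rightarrow> ennreal"
  assumes sum: "(f has_sum s) A" and fin: "s < \<infinity>"
  shows "((\<lambda>x. enn2real (f x)) has_sum enn2real s) A"
proof -
  have s: "s = infsum f A" using sum by (rule infsumI[symmetric])
  have "f x < \<infinity>" if "x \<in> A" for x
  proof -
    have "f x \<le> s" unfolding s using that
      by (intro infsum_mono_neutral[of f "{x}" f A, simplified]) auto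
    then show ?thesis using fin by simp
  qed
  then have "sum (enn2real \<circ> f) F = enn2real (sum f F)" if "F \<subseteq> A" for F
    using that by (subst enn2real_sum) auto
  moreover have "enn2real \<midarrow>s\<rightarrow> enn2real s"
    using fin by (intro tendsto_enn2real) (auto simp: less_top)
  ultimately show ?thesis
    using has_sum_comm_additive_general[of A enn2real f s, OF _ _ sum] by (simp add: o_def)
qed

lemma has_sum_ennreal:
  fixes f :: "'a \<Rightarrow> real"
  assumes sum: "(f has_sum s) A" and nonneg: "\<And>x. x \<in> A \<Longrightarrow> 0 \<le> f x"
  shows "((\<lambda>x. ennreal (f x)) has_sum ennreal s) A"
proof -
  have "sum (ennreal \<circ> f) F = ennreal (sum f F)" if "F \<subseteq> A" for F
    using that nonneg by (auto simp: subset_iff)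
  moreover have "ennreal \<midarrow>s\<rightarrow> ennreal s"
    by (intro tendsto_ennrealI tendsto_ident_at)
  ultimately show ?thesis
    using has_sum_comm_additive_general[of A ennreal f s, OF _ _ sum] by (simp add: o_def)
qed

lemma infsum_slice_le_ennreal:
  fixes f :: "'a \<times> 'b \<Rightarrow> ennreal"
  assumes "x \<in> A"
  shows "(\<Sum>\<^sub>\<infinity>y\<in>B x. f (x, y)) \<le> infsum f (Sigma A B)"
proof -
  have "(\<Sum>\<^sub>\<infinity>y\<in>B x. f (x, y)) = infsum f (Pair x ` B x)"
    by (simp add: infsum_reindex inj_on_def o_def)
  also have "\<dots> \<le> infsum f (Sigma A B)"
    using assms by (intro infsum_mono_neutral) auto
  finally show ?thesis .
qed

text \<open>\<open>ennreal\<close> is not an instance of \<open>t3_space\<close>, so the Fubini rule \<open>has_sum_SigmaD\<close>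
  is applied to the real parts.\<close>
lemma has_sum_Sigma_ennreal:
  fixes f :: "'a \<times> 'b \<Rightarrow> ennreal"
  assumes fin: "infsum f (Sigma A B) < \<infinity>"
  shows "((\<lambda>x. \<Sum>\<^sub>\<infinity>y\<in>B x. f (x, y)) has_sum infsum f (Sigma A B)) A"
proof -
  let ?S = "infsum f (Sigma A B)" and ?g = "\<lambda>x. \<Sum>\<^sub>\<infinity>y\<in>B x. f (x, y)"
  have g_fin: "?g x < \<infinity>" if "x \<in> A" for x
    using infsum_slice_le_ennreal[where B=B and f=f, OF that] fin by simp
  have "((\<lambda>p. enn2real (f p)) has_sum enn2real ?S) (Sigma A B)"
    using fin by (intro has_sum_enn2real has_sum_infsum) simp_all
  moreover have "((\<lambda>y. enn2real (f (x, y))) has_sum enn2real (?g x)) (B x)" if "x \<in> A" for x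
    using g_fin[OF that] by (intro has_sum_enn2real has_sum_infsum) simp_all
  ultimately have "((\<lambda>x. enn2real (?g x)) has_sum enn2real ?S) A"
    by (rule has_sum_SigmaD)
  then have "((\<lambda>x. ennreal (enn2real (?g x))) has_sum ennreal (enn2real ?S)) A"
    by (rule has_sum_ennreal) simp
  then show ?thesis
    using fin g_fin by (subst (asm) has_sum_cong[of A _ ?g]) auto
qed

lemma infsum_ennreal_eq_suminf_from_nat_into:
  fixes f :: "'a \<Rightarrow> ennreal"
  assumes A: "countable A"
  shows "infsum f A = (\<Sum>n. if n \<in> to_nat_on A ` A then f (from_nat_into A n) else 0)"
proof -
  let ?N = "to_nat_on A ` A"
  let ?g = "\<lambda>n. if n \<in> ?N then f (from_nat_into A n) else 0"
  have "infsum f A = infsum (f \<circ> from_nat_into A \<circ> to_nat_on A) A"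
    using A by (intro infsum_cong) auto
  also have "\<dots> = infsum (f \<circ> from_nat_into A) ?N"
    using A by (intro infsum_reindex[symmetric]) auto
  also have "\<dots> = infsum ?g UNIV"
    by (intro infsum_cong_neutral) auto
  also have "\<dots> = suminf ?g"
    by (intro sums_unique has_sum_imp_sums has_sum_infsum) simp
  finally show ?thesis .
qed

lemma borel_measurable_infsum_ennreal:
  fixes f :: "'a \<Rightarrow> 'b \<Rightarrow> ennreal"
  assumes A: "countable A" and f: "\<And>y. y \<in> A \<Longrightarrow> (\<lambda>x. f x y) \<in> borel_measurable M"
  shows "(\<lambda>x. \<Sum>\<^sub>\<infinity>y\<in>A. f x y) \<in> borel_measurable M"
proof -
  have "(\<lambda>x. if n \<in> to_nat_on A ` A then f x (from_nat_into A n) else 0) \<in> borel_measurable M" for n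
    using A f by (cases "n \<in> to_nat_on A ` A") auto
  then show ?thesis
    unfolding infsum_ennreal_eq_suminf_from_nat_into[OF A] by (rule borel_measurable_suminf_order)
qed

lemma nn_integral_infsum_ennreal:
  fixes f :: "'a \<Rightarrow> 'b \<Rightarrow> ennreal"
  assumes A: "countable A" and f: "\<And>y. y \<in> A \<Longrightarrow> (\<lambda>x. f x y) \<in> borel_measurable M"
  shows "(\<integral>\<^sup>+x. (\<Sum>\<^sub>\<infinity>y\<in>A. f x y) \<partial>M) = (\<Sum>\<^sub>\<infinity>y\<in>A. \<integral>\<^sup>+x. f x y \<partial>M)"
proof -
  let ?N = "to_nat_on A ` A"
  have meas: "(\<lambda>x. if n \<in> ?N then f x (from_nat_into A n) else 0) \<in> borel_measurable M" for n
    using A f by (cases "n \<in> ?N") auto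
  have "(\<integral>\<^sup>+x. (\<Sum>\<^sub>\<infinity>y\<in>A. f x y) \<partial>M)
      = (\<Sum>n. \<integral>\<^sup>+x. (if n \<in> ?N then f x (from_nat_into A n) else 0) \<partial>M)"
    unfolding infsum_ennreal_eq_suminf_from_nat_into[OF A]
    using meas by (rule nn_integral_suminf)
  also have "\<dots> = (\<Sum>n. if n \<in> ?N then \<integral>\<^sup>+x. f x (from_nat_into A n) \<partial>M else 0)"
    by (intro suminf_cong) auto
  also have "\<dots> = (\<Sum>\<^sub>\<infinity>y\<in>A. \<integral>\<^sup>+x. f x y \<partial>M)"
    by (rule infsum_ennreal_eq_suminf_from_nat_into[OF A, symmetric])
  finally show ?thesis .
qed

section \<open>Configurations and the weight \<open>G\<close>\<close>

lemma locally_finite_conf_countable: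
  assumes "locally_finite_conf (\<eta> :: 'a::euclidean_space set)"
  shows "countable \<eta>"
proof -
  have "\<eta> = (\<Union>n::nat. \<eta> \<inter> cball 0 (real n))"
    by (auto intro: real_arch_simple)
  also have "countable \<dots>"
  proof (rule countable_UN)
    show "countable (\<eta> \<inter> cball 0 (real n))" for n
      using assms unfolding locally_finite_conf_def by (simp add: countable_finite)
  qed simp
  finally show ?thesis .
qed

lemma G_weight_le_dyadic:
  fixes x :: "'a::euclidean_space"
  assumes "\<epsilon> > 0"
  obtains k :: nat where "norm x < 2 ^ k"
    and "G_weight \<epsilon> x \<le> 2 powr ((real DIM('a) + \<epsilon>) * (1 - real k))"
proof -
  define s where "s = real DIM('a) + \<epsilon>"
  obtain n :: nat where "1 + norm x < 2 ^ n" using real_arch_pow[of 2 "1 + norm x"] by auto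
  define k where "k = (LEAST k. 1 + norm x < (2::real) ^ k)"
  have k: "1 + norm x < 2 ^ k"
    unfolding k_def by (rule LeastI) fact
  then obtain j where j: "k = Suc j"
    by (cases k) auto
  have "\<not> 1 + norm x < (2::real) ^ j"
    unfolding k_def by (rule not_less_Least) (metis j k_def lessI)
  then have "2 powr real j \<le> 1 + norm x"
    by (simp add: powr_realpow)
  then have "G_weight \<epsilon> x \<le> (2 powr real j) powr (- s)"
    unfolding G_weight_def s_def using assms by (intro powr_mono2') auto
  also have "\<dots> = 2 powr (s * (1 - real k))"
    by (simp add: powr_powr j algebra_simps)
  finally have "G_weight \<epsilon> x \<le> 2 powr (s * (1 - real k))" .
  moreover have "norm x < 2 ^ k"
    using k by linarith
  ultimately show ?thesis
    using that unfolding s_def by blast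
qed

lemma emeasure_lborel_ball_eq:
  fixes c :: "'a::euclidean_space"
  assumes "0 \<le> r"
  shows "emeasure lborel (ball c r) = ennreal (r ^ DIM('a) * measure lborel (ball (0::'a) 1))"
proof -
  have "emeasure lborel (ball c r) = ennreal (measure lborel (ball c r))"
    using emeasure_lborel_ball_finite[of c r] by (intro emeasure_eq_ennreal_measure) (simp add: less_top)
  also have "\<dots> = ennreal (r ^ DIM('a) * measure lborel (ball (0::'a) 1))"
    using assms by (subst content_ball_conv_unit_ball) auto
  finally show ?thesis .
qed

lemma nn_integral_G_weight_finite:
  assumes eps: "\<epsilon> > 0"
  shows "(\<integral>\<^sup>+x. ennreal (G_weight \<epsilon> (x::'a::euclidean_space)) \<partial>lborel) < \<infinity>"
proof -
  define s where "s = real DIM('a) + \<epsilon>"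
  define c where "c k = 2 powr (s * (1 - real k))" for k :: nat
  define V where "V = measure lborel (ball (0::'a) 1)"
  define q where "q = (2::real) powr (- \<epsilon>)"
  have V_nonneg: "0 \<le> V"
    unfolding V_def by simp
  have q: "0 \<le> q" "q < 1"
    unfolding q_def using eps by (auto simp: powr_minus_divide)
  have "ennreal (G_weight \<epsilon> x) \<le> (\<Sum>k. ennreal (c k) * indicator (ball (0::'a) (2 ^ k)) x)" for x :: 'a
  proof -
    obtain k where "norm x < 2 ^ k" "G_weight \<epsilon> x \<le> c k"
      using G_weight_le_dyadic[OF eps, of x] unfolding c_def s_def by blast
    then have "ennreal (G_weight \<epsilon> x) \<le> ennreal (c k) * indicator (ball (0::'a) (2 ^ k)) x"
      by (simp add: ennreal_leI)
    also have "\<dots> \<le> (\<Sum>k. ennreal (c k) * indicator (ball (0::'a) (2 ^ k)) x)"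
      using sum_le_suminf[OF summableI, of "{k}"] by simp
    finally show ?thesis .
  qed
  then have "(\<integral>\<^sup>+x. ennreal (G_weight \<epsilon> (x::'a)) \<partial>lborel)
      \<le> (\<integral>\<^sup>+x. (\<Sum>k. ennreal (c k) * indicator (ball (0::'a) (2 ^ k)) x) \<partial>lborel)"
    by (intro nn_integral_mono)
  also have "\<dots> = (\<Sum>k. \<integral>\<^sup>+x. ennreal (c k) * indicator (ball (0::'a) (2 ^ k)) x \<partial>lborel)"
    by (rule nn_integral_suminf) (auto intro!: borel_measurable_times_ennreal borel_measurable_indicator)
  also have "\<dots> = (\<Sum>k. ennreal (c k) * emeasure lborel (ball (0::'a) (2 ^ k)))"
    by (intro suminf_cong nn_integral_cmult_indicator) simp
  also have "\<dots> = (\<Sum>k. ennreal (2 powr s * V * q ^ k))"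
  proof (rule suminf_cong)
    fix k :: nat
    have "c k * (2 ^ k) ^ DIM('a) = 2 powr (s * (1 - real k) + real DIM('a) * real k)"
      unfolding c_def powr_add by (simp add: powr_realpow[symmetric] powr_power powr_powr mult.commute)
    also have "\<dots> = 2 powr s * q ^ k"
      unfolding q_def s_def by (simp add: powr_power powr_powr flip: powr_add) (simp add: algebra_simps)
    finally show "ennreal (c k) * emeasure lborel (ball (0::'a) (2 ^ k)) = ennreal (2 powr s * V * q ^ k)"
      using V_nonneg by (simp add: emeasure_lborel_ball_eq V_def c_def mult_ac flip: ennreal_mult)
  qed
  also have "\<dots> < \<infinity>"
    using q V_nonneg by (simp add: less_top[symmetric] ennreal_suminf_neq_top summable_mult summable_geometric)
  finally show ?thesis .
qed

section \<open>Far points of a configuration\<close>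

text \<open>Each unit direction \<open>u\<close> lies in an open half-space that is either
  \<open>{v. z \<bullet> u / 2 < z \<bullet> v}\<close> for a point \<open>z \<in> S\<close> with \<open>0 < z \<bullet> u\<close>, or \<open>{v. 0 < u \<bullet> v}\<close>
  if there is no such point, in which case that half-space contains no direction of \<open>S\<close>;
  finitely many of them cover the sphere.\<close>
lemma finite_subset_inner_dominates:
  fixes S :: "'a::euclidean_space set"
  obtains F c where "finite F" "F \<subseteq> S" "c > 0"
    "\<And>y. y \<in> S \<Longrightarrow> y \<noteq> 0 \<Longrightarrow> \<exists>z\<in>F. c * norm y < z \<bullet> y"
proof -
  define P where "P u \<longleftrightarrow> (\<exists>z\<in>S. 0 < z \<bullet> u)" for u :: 'a
  define Z where "Z u = (SOME z. z \<in> S \<and> 0 < z \<bullet> u)" for u :: 'a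
  have Z: "Z u \<in> S \<and> 0 < Z u \<bullet> u" if "P u" for u
    using that unfolding P_def Z_def by (metis (mono_tags, lifting) someI_ex)
  define Cone where "Cone u = (if P u then {v. Z u \<bullet> u / 2 < Z u \<bullet> v} else {v. 0 < u \<bullet> v})" for u
  have cover: "sphere 0 1 \<subseteq> (\<Union>u\<in>sphere 0 1. Cone u)"
  proof
    fix u :: 'a assume u: "u \<in> sphere 0 1"
    then have "0 < u \<bullet> u" by auto
    with Z[of u] have "u \<in> Cone u" unfolding Cone_def by auto
    with u show "u \<in> (\<Union>u\<in>sphere 0 1. Cone u)" by blast
  qed
  have "open (Cone u)" if "u \<in> sphere 0 1" for u
    unfolding Cone_def by (simp only: if_splits open_halfspace_gt) simp
  then obtain U where U: "U \<subseteq> sphere 0 1" "finite U" "sphere 0 1 \<subseteq> (\<Union>u\<in>U. Cone u)"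
    using compactE_image[OF compact_sphere _ cover] by metis
  define U1 where "U1 = {u\<in>U. P u}"
  define c where "c = Min (insert 1 ((\<lambda>u. Z u \<bullet> u / 2) ` U1))"
  have fin: "finite U1" unfolding U1_def using U by simp
  have c_pos: "c > 0"
    unfolding c_def using fin Z by (auto simp: U1_def)
  have c_le: "c \<le> Z u \<bullet> u / 2" if "u \<in> U1" for u
    unfolding c_def using fin that by (intro Min_le) auto
  show ?thesis
  proof (rule that[of "Z ` U1" c])
    show "finite (Z ` U1)" "Z ` U1 \<subseteq> S" "c > 0"
      using fin c_pos Z by (auto simp: U1_def)
    fix y assume y: "y \<in> S" "y \<noteq> 0"
    define v where "v = y /\<^sub>R norm y"
    have "v \<in> sphere 0 1" using y unfolding v_def by simp
    then obtain u where u: "u \<in> U" "v \<in> Cone u" using U(3) by blast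
    have yv: "w \<bullet> y = norm y * (w \<bullet> v)" for w
      using y unfolding v_def by simp
    show "\<exists>z\<in>Z ` U1. c * norm y < z \<bullet> y"
    proof (cases "P u")
      case True
      then have "c < Z u \<bullet> v" using u c_le[of u] by (auto simp: Cone_def U1_def)
      then have "c * norm y < Z u \<bullet> y" using y by (simp add: yv)
      with True u show ?thesis by (auto simp: U1_def)
    next
      case False
      then have "0 < u \<bullet> y" using u y by (simp add: Cone_def yv inner_commute)
      with False y show ?thesis by (auto simp: P_def inner_commute)
    qed
  qed
qed

lemma finite_subset_closer_than_center:
  fixes S :: "'a::euclidean_space set" and x :: 'a
  obtains F R where "finite F" "F \<subseteq> S"
    "\<And>y. y \<in> S \<Longrightarrow> R < dist x y \<Longrightarrow> \<exists>z\<in>F. 0 < dist y z \<and> dist y z < dist x y"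
proof -
  obtain F c where F: "finite F" "F \<subseteq> (\<lambda>y. y - x) ` S" and c: "c > 0"
    and dom: "\<And>y. y \<in> (\<lambda>y. y - x) ` S \<Longrightarrow> y \<noteq> 0 \<Longrightarrow> \<exists>z\<in>F. c * norm y < z \<bullet> y"
    using finite_subset_inner_dominates[of "(\<lambda>y. y - x) ` S"] by blast
  define R where "R = (\<Sum>z\<in>F. (norm z)\<^sup>2 / (2 * c) + norm z)"
  have R_ge: "(norm z)\<^sup>2 / (2 * c) \<le> R" "norm z \<le> R" if "z \<in> F" for z
    using F(1) that c unfolding R_def
    by (auto intro!: order_trans[OF _ member_le_sum[OF that]] sum_nonneg)
  show ?thesis
  proof (rule that[of "(\<lambda>z. z + x) ` F" R])
    show "finite ((\<lambda>z. z + x) ` F)" "(\<lambda>z. z + x) ` F \<subseteq> S"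
      using F by auto
    fix y assume y: "y \<in> S" "R < dist x y"
    have "0 \<le> R" unfolding R_def using c by (auto intro!: sum_nonneg)
    then have "y - x \<noteq> 0" using y by auto
    then obtain z where z: "z \<in> F" "c * norm (y - x) < z \<bullet> (y - x)"
      using dom y by blast
    have ny: "R < norm (y - x)" using y by (simp add: dist_norm norm_minus_commute)
    have "(norm z)\<^sup>2 \<le> 2 * c * R"
      using R_ge(1)[OF z(1)] c by (simp add: field_simps)
    also have "\<dots> < 2 * c * norm (y - x)" using ny c by simp
    finally have "(norm ((y - x) - z))\<^sup>2 < (norm (y - x))\<^sup>2"
      using z(2) by (simp add: power2_norm_eq_inner inner_diff_left inner_diff_right inner_commute)
    then have "dist y (z + x) < dist x y"
      by (simp add: dist_norm norm_minus_commute algebra_simps power_less_imp_less_base)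
    moreover have "y \<noteq> z + x"
      using R_ge(2)[OF z(1)] ny by auto
    ultimately show "\<exists>w\<in>(\<lambda>z. z + x) ` F. 0 < dist y w \<and> dist y w < dist x y"
      using z(1) by auto
  qed
qed

lemma infsum_antimono_kernel_finite:
  fixes \<eta> :: "'a::euclidean_space set" and f :: "'a \<Rightarrow> real" and K :: "real \<Rightarrow> real"
  assumes lf: "locally_finite_conf \<eta>" and f_nonneg: "\<And>y. 0 \<le> f y"
    and K_antimono: "\<And>p q. 0 < p \<Longrightarrow> p \<le> q \<Longrightarrow> K q \<le> K p"
    and slices: "\<And>z. z \<in> \<eta> \<Longrightarrow> (\<Sum>\<^sub>\<infinity>y\<in>\<eta> - {z}. ennreal (f y * K (dist z y))) < \<infinity>"
  shows "(\<Sum>\<^sub>\<infinity>y\<in>\<eta>. ennreal (f y * K (dist x y))) < \<infinity>"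
proof -
  obtain F R where F: "finite F" "F \<subseteq> \<eta>"
    and far: "\<And>y. y \<in> \<eta> \<Longrightarrow> R < dist x y \<Longrightarrow> \<exists>z\<in>F. 0 < dist y z \<and> dist y z < dist x y"
    using finite_subset_closer_than_center[of \<eta> x] by blast
  let ?g = "\<lambda>z y. ennreal (f y * K (dist z y))"
  have near_fin: "finite (\<eta> \<inter> cball x R)"
    using lf unfolding locally_finite_conf_def by simp
  have "?g x y \<le> indicator (cball x R) y * ?g x y + (\<Sum>z\<in>F. indicator (\<eta> - {z}) y * ?g z y)"
    if y: "y \<in> \<eta>" for y
  proof (cases "dist x y \<le> R")
    case False
    then obtain z where z: "z \<in> F" "0 < dist y z" "dist y z < dist x y"
      using far[OF y] by auto
    have "?g x y \<le> indicator (\<eta> - {z}) y * ?g z y"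
      using z y K_antimono[of "dist z y" "dist x y"] f_nonneg[of y]
      by (auto simp: dist_commute intro!: ennreal_leI mult_left_mono)
    also have "\<dots> \<le> (\<Sum>z\<in>F. indicator (\<eta> - {z}) y * ?g z y)"
      using F(1) z(1) by (intro member_le_sum) auto
    finally show ?thesis by (simp add: add_increasing)
  qed simp
  moreover have near: "(\<Sum>\<^sub>\<infinity>y\<in>\<eta>. indicator (cball x R) y * ?g x y) = (\<Sum>\<^sub>\<infinity>y\<in>\<eta> \<inter> cball x R. ?g x y)"
    by (intro infsum_cong_neutral) auto
  moreover have slice: "(\<Sum>\<^sub>\<infinity>y\<in>\<eta>. indicator (\<eta> - {z}) y * ?g z y) = (\<Sum>\<^sub>\<infinity>y\<in>\<eta> - {z}. ?g z y)" for z
    by (intro infsum_cong_neutral) auto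
  ultimately have "(\<Sum>\<^sub>\<infinity>y\<in>\<eta>. ?g x y)
      \<le> (\<Sum>\<^sub>\<infinity>y\<in>\<eta>. indicator (cball x R) y * ?g x y + (\<Sum>z\<in>F. indicator (\<eta> - {z}) y * ?g z y))"
    by (intro infsum_mono) simp_all
  also have "\<dots> = (\<Sum>\<^sub>\<infinity>y\<in>\<eta> \<inter> cball x R. ?g x y) + (\<Sum>z\<in>F. \<Sum>\<^sub>\<infinity>y\<in>\<eta> - {z}. ?g z y)"
    using F(1) by (simp only: infsum_add summable_on_ennreal_valued infsum_sum_ennreal near slice)
  also have "\<dots> < \<infinity>"
    using near_fin F slices by (auto simp: less_top sum_Pinfty)
  finally show ?thesis .
qed

section \<open>Inserting and deleting a point\<close>

lemma psi_commute: "psi \<phi> K x y = psi \<phi> K y x"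
  unfolding psi_def by (simp add: dist_commute mult_ac)

lemma psi_eq_kernel: "psi \<phi> K x y = \<phi> y * (\<phi> x * K (dist y x))"
  by (simp add: psi_def dist_commute mult_ac)

lemma infsum_psi_eq:
  assumes "0 \<le> \<phi> x"
  shows "(\<Sum>\<^sub>\<infinity>y\<in>A. ennreal (psi \<phi> K x y)) = ennreal (\<phi> x) * (\<Sum>\<^sub>\<infinity>y\<in>A. ennreal (\<phi> y * K (dist x y)))"
proof -
  have "(\<Sum>\<^sub>\<infinity>y\<in>A. ennreal (psi \<phi> K x y)) = (\<Sum>\<^sub>\<infinity>y\<in>A. ennreal (\<phi> x) * ennreal (\<phi> y * K (dist x y)))"
    using assms by (intro infsum_cong) (simp add: psi_def ennreal_mult' mult.assoc)
  also have "\<dots> = ennreal (\<phi> x) * (\<Sum>\<^sub>\<infinity>y\<in>A. ennreal (\<phi> y * K (dist x y)))"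
    by (rule infsum_cmult_right_ennreal) simp
  finally show ?thesis .
qed

definition W_gain ::
    "('a::euclidean_space \<Rightarrow> real) \<Rightarrow> ('a \<Rightarrow> real) \<Rightarrow> (real \<Rightarrow> real) \<Rightarrow> 'a set \<Rightarrow> 'a \<Rightarrow> ennreal"
  where
  "W_gain h \<phi> K A x = ennreal (h x) + (\<Sum>\<^sub>\<infinity>y\<in>A. ennreal (psi \<phi> K x y))"

lemma two_Vfun_eq_infsum_Sigma:
  "2 * Vfun \<phi> K A = (\<Sum>\<^sub>\<infinity>p\<in>Sigma A (\<lambda>x. A - {x}). ennreal (psi \<phi> K (fst p) (snd p)))"
proof -
  have "2 * (1 / 2 :: ennreal) = 1"
    by (subst mult.commute) (simp add: ennreal_divide_times)
  moreover have "{(x, y). x \<in> A \<and> y \<in> A \<and> x \<noteq> y} = Sigma A (\<lambda>x. A - {x})"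
    by auto
  ultimately show ?thesis
    unfolding Vfun_def by (simp add: case_prod_beta' mult.assoc[symmetric])
qed

lemma Vfun_insert:
  assumes "x \<notin> A"
  shows "Vfun \<phi> K (insert x A) = Vfun \<phi> K A + (\<Sum>\<^sub>\<infinity>y\<in>A. ennreal (psi \<phi> K x y))"
proof -
  let ?g = "\<lambda>(u, v). ennreal (psi \<phi> K u v)"
  let ?P = "\<lambda>A. {(u, v). u \<in> A \<and> v \<in> A \<and> u \<noteq> v}"
  let ?S = "\<Sum>\<^sub>\<infinity>y\<in>A. ennreal (psi \<phi> K x y)"
  have P_insert: "?P (insert x A) = ?P A \<union> (Pair x ` A \<union> (\<lambda>y. (y, x)) ` A)"
    using assms by auto
  have "infsum ?g (Pair x ` A) = ?S" "infsum ?g ((\<lambda>y. (y, x)) ` A) = ?S"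
    by (subst infsum_reindex; simp add: inj_on_def o_def psi_commute)+
  then have "infsum ?g (Pair x ` A \<union> (\<lambda>y. (y, x)) ` A) = ?S + ?S"
    using assms by (subst infsum_Un_disjoint) auto
  moreover have "infsum ?g (?P (insert x A)) = infsum ?g (?P A) + infsum ?g (Pair x ` A \<union> (\<lambda>y. (y, x)) ` A)"
    unfolding P_insert using assms by (intro infsum_Un_disjoint) auto
  ultimately have "Vfun \<phi> K (insert x A) = 1 / 2 * infsum ?g (?P A) + 1 / 2 * (2 * ?S)"
    unfolding Vfun_def by (simp add: distrib_left mult_2)
  also have "1 / 2 * (2 * ?S) = ?S"
    by (simp add: mult.assoc[symmetric] ennreal_divide_times)
  finally show ?thesis
    unfolding Vfun_def .
qed

lemma pair_h_insert:
  assumes "x \<notin> A"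
  shows "pair_h h (insert x A) = pair_h h A + ennreal (h x)"
  unfolding pair_h_def using assms by (simp add: infsum_insert add.commute)

lemma Wfun_insert:
  assumes "x \<notin> A"
  shows "Wfun h \<phi> K (insert x A) = Wfun h \<phi> K A + W_gain h \<phi> K A x"
  unfolding Wfun_def W_gain_def using assms by (simp add: pair_h_insert Vfun_insert add_ac)

lemma Wfun_remove:
  assumes "x \<in> A"
  shows "Wfun h \<phi> K A = Wfun h \<phi> K (A - {x}) + W_gain h \<phi> K (A - {x}) x"
  using Wfun_insert[of x "A - {x}"] assms by (simp add: insert_absorb)

lemma infsum_psi_slice_le:
  assumes "x \<in> A"
  shows "(\<Sum>\<^sub>\<infinity>y\<in>A - {x}. ennreal (psi \<phi> K x y)) \<le> 2 * Vfun \<phi> K A"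
  unfolding two_Vfun_eq_infsum_Sigma
  using infsum_slice_le_ennreal[where f="\<lambda>p. ennreal (psi \<phi> K (fst p) (snd p))", OF assms] by simp

lemma has_sum_W_gain_remove:
  assumes "Vfun \<phi> K A < \<infinity>"
  shows "((\<lambda>x. W_gain h \<phi> K (A - {x}) x) has_sum (pair_h h A + 2 * Vfun \<phi> K A)) A"
proof -
  have "((\<lambda>x. ennreal (h x)) has_sum pair_h h A) A"
    unfolding pair_h_def by (rule has_sum_infsum) simp
  moreover have "2 * Vfun \<phi> K A < \<infinity>"
    using assms by (simp add: ennreal_mult_less_top)
  then have "((\<lambda>x. \<Sum>\<^sub>\<infinity>y\<in>A - {x}. ennreal (psi \<phi> K x y)) has_sum 2 * Vfun \<phi> K A) A"
    unfolding two_Vfun_eq_infsum_Sigma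
    using has_sum_Sigma_ennreal[where f="\<lambda>p. ennreal (psi \<phi> K (fst p) (snd p))" and A=A and B="\<lambda>x. A - {x}"]
    by simp
  ultimately show ?thesis
    unfolding W_gain_def by (rule has_sum_add)
qed

section \<open>Integrating the insertion gain\<close>

lemma borel_measurable_antimono_on_pos:
  fixes K :: "real \<Rightarrow> real"
  assumes K_antimono: "\<And>p q. 0 < p \<Longrightarrow> p \<le> q \<Longrightarrow> K q \<le> K p"
  shows "(\<lambda>q. K (max q 0)) \<in> borel_measurable borel"
proof -
  have "(\<lambda>q. - K (max q 0)) \<in> borel_measurable borel"
    by (rule borel_measurable_piecewise_mono[of "{{..0}, {0<..}}"])
      (auto simp: mono_on_def intro: K_antimono)
  then show ?thesis
    using borel_measurable_uminus by fastforce
qed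

lemma borel_measurable_kernel:
  fixes \<phi> :: "'a::euclidean_space \<Rightarrow> real"
  assumes K_antimono: "\<And>p q. 0 < p \<Longrightarrow> p \<le> q \<Longrightarrow> K q \<le> K p"
    and [measurable]: "\<phi> \<in> borel_measurable borel"
  shows "(\<lambda>x. \<phi> x * K (dist y x)) \<in> borel_measurable borel"
proof -
  note [measurable] = borel_measurable_antimono_on_pos[OF K_antimono]
  have "(\<lambda>x. \<phi> x * K (max (dist y x) 0)) \<in> borel_measurable borel"
    by measurable
  then show ?thesis by simp
qed

lemma nn_integral_psi_le:
  fixes \<phi> :: "'a::euclidean_space \<Rightarrow> real"
  assumes K_antimono: "\<And>p q. 0 < p \<Longrightarrow> p \<le> q \<Longrightarrow> K q \<le> K p"
    and \<phi>_meas: "\<phi> \<in> borel_measurable borel" and \<phi>_nonneg: "0 \<le> \<phi> y"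
    and C: "\<And>x. (\<integral>\<^sup>+z. ennreal (\<phi> z * K (dist x z)) \<partial>lborel) \<le> C"
  shows "(\<integral>\<^sup>+x. ennreal (psi \<phi> K x y) \<partial>lborel) \<le> ennreal (\<phi> y) * C"
proof -
  have meas: "(\<lambda>x. ennreal (\<phi> x * K (dist y x))) \<in> borel_measurable lborel"
    using borel_measurable_kernel[OF K_antimono \<phi>_meas] by simp
  have "(\<integral>\<^sup>+x. ennreal (psi \<phi> K x y) \<partial>lborel)
      = (\<integral>\<^sup>+x. ennreal (\<phi> y) * ennreal (\<phi> x * K (dist y x)) \<partial>lborel)"
    using \<phi>_nonneg unfolding psi_eq_kernel by (simp add: ennreal_mult')
  also have "\<dots> = ennreal (\<phi> y) * (\<integral>\<^sup>+x. ennreal (\<phi> x * K (dist y x)) \<partial>lborel)"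
    using meas by (rule nn_integral_cmult)
  also have "\<dots> \<le> ennreal (\<phi> y) * C"
    using C by (rule mult_left_mono) simp
  finally show ?thesis .
qed

lemma borel_measurable_psi:
  fixes \<phi> :: "'a::euclidean_space \<Rightarrow> real"
  assumes K_antimono: "\<And>p q. 0 < p \<Longrightarrow> p \<le> q \<Longrightarrow> K q \<le> K p"
    and \<phi>_meas: "\<phi> \<in> borel_measurable borel"
  shows "(\<lambda>x. ennreal (psi \<phi> K x y)) \<in> borel_measurable lborel"
proof -
  have "(\<lambda>x. \<phi> x * K (dist y x)) \<in> borel_measurable borel"
    by (rule borel_measurable_kernel[OF K_antimono \<phi>_meas])
  then have "(\<lambda>x. ennreal (\<phi> y * (\<phi> x * K (dist y x)))) \<in> borel_measurable lborel"
    by measurable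
  then show ?thesis
    unfolding psi_eq_kernel .
qed

lemma borel_measurable_W_gain:
  fixes \<phi> h :: "'a::euclidean_space \<Rightarrow> real"
  assumes "countable A" and K_antimono: "\<And>p q. 0 < p \<Longrightarrow> p \<le> q \<Longrightarrow> K q \<le> K p"
    and \<phi>_meas: "\<phi> \<in> borel_measurable borel" and [measurable]: "h \<in> borel_measurable borel"
  shows "W_gain h \<phi> K A \<in> borel_measurable lborel"
proof -
  have [measurable]: "(\<lambda>x. \<Sum>\<^sub>\<infinity>y\<in>A. ennreal (psi \<phi> K x y)) \<in> borel_measurable borel"
    using \<open>countable A\<close> borel_measurable_psi[OF K_antimono \<phi>_meas]
    by (intro borel_measurable_infsum_ennreal) auto
  show ?thesis
    unfolding W_gain_def[abs_def] by simp
qed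

lemma nn_integral_W_gain_le:
  fixes \<phi> h :: "'a::euclidean_space \<Rightarrow> real"
  assumes A: "countable A" and K_antimono: "\<And>p q. 0 < p \<Longrightarrow> p \<le> q \<Longrightarrow> K q \<le> K p"
    and \<phi>_meas: "\<phi> \<in> borel_measurable borel" and \<phi>_nonneg: "\<And>y. 0 \<le> \<phi> y"
    and h_meas: "h \<in> borel_measurable borel"
    and C: "\<And>x. (\<integral>\<^sup>+z. ennreal (\<phi> z * K (dist x z)) \<partial>lborel) \<le> ennreal C"
  shows "(\<integral>\<^sup>+x. W_gain h \<phi> K A x \<partial>lborel)
    \<le> (\<integral>\<^sup>+x. ennreal (h x) \<partial>lborel) + ennreal C * (\<Sum>\<^sub>\<infinity>y\<in>A. ennreal (\<phi> y))"
proof -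
  have psi_meas: "(\<lambda>x. ennreal (psi \<phi> K x y)) \<in> borel_measurable lborel" for y
    by (rule borel_measurable_psi[OF K_antimono \<phi>_meas])
  have "(\<integral>\<^sup>+x. W_gain h \<phi> K A x \<partial>lborel)
      = (\<integral>\<^sup>+x. ennreal (h x) \<partial>lborel) + (\<integral>\<^sup>+x. (\<Sum>\<^sub>\<infinity>y\<in>A. ennreal (psi \<phi> K x y)) \<partial>lborel)"
    unfolding W_gain_def using A psi_meas h_meas
    by (intro nn_integral_add) (auto intro: borel_measurable_infsum_ennreal)
  also have "(\<integral>\<^sup>+x. (\<Sum>\<^sub>\<infinity>y\<in>A. ennreal (psi \<phi> K x y)) \<partial>lborel)
      = (\<Sum>\<^sub>\<infinity>y\<in>A. \<integral>\<^sup>+x. ennreal (psi \<phi> K x y) \<partial>lborel)"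
    using A psi_meas by (rule nn_integral_infsum_ennreal)
  also have "\<dots> \<le> (\<Sum>\<^sub>\<infinity>y\<in>A. ennreal C * ennreal (\<phi> y))"
    using nn_integral_psi_le[OF K_antimono \<phi>_meas \<phi>_nonneg C]
    by (intro infsum_mono) (simp_all add: mult.commute)
  also have "\<dots> = ennreal C * (\<Sum>\<^sub>\<infinity>y\<in>A. ennreal (\<phi> y))"
    by (rule infsum_cmult_right_ennreal) simp
  finally show ?thesis
    by (simp add: add_left_mono)
qed

lemma integral_mult_bounded_le:
  fixes b u :: "'a \<Rightarrow> real" and g :: "'a \<Rightarrow> ennreal"
  assumes b_meas: "b \<in> borel_measurable M" and u_meas: "u \<in> borel_measurable M"
    and b: "\<And>x. 0 \<le> b x" "\<And>x. b x \<le> c"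
    and u: "\<And>x. 0 \<le> u x" "\<And>x. ennreal (u x) \<le> g x"
    and g_meas: "g \<in> borel_measurable M" and fin: "ennreal c * (\<integral>\<^sup>+x. g x \<partial>M) < \<infinity>"
  shows "integrable M (\<lambda>x. b x * u x)" "0 \<le> (\<integral>x. b x * u x \<partial>M)"
    "(\<integral>x. b x * u x \<partial>M) \<le> enn2real (ennreal c * (\<integral>\<^sup>+x. g x \<partial>M))"
proof -
  have meas: "(\<lambda>x. b x * u x) \<in> borel_measurable M"
    using b_meas u_meas by measurable
  have nonneg: "0 \<le> b x * u x" for x
    using b u by simp
  have "ennreal (b x * u x) \<le> ennreal c * g x" for x
  proof -
    have "ennreal (b x * u x) \<le> ennreal (c * u x)"
      using b u by (intro ennreal_leI mult_right_mono) auto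
    also have "\<dots> \<le> ennreal c * g x"
      using u(1)[of x] b(1)[of x] b(2)[of x] by (simp add: ennreal_mult' mult_left_mono u(2))
    finally show ?thesis .
  qed
  then have "(\<integral>\<^sup>+x. ennreal (b x * u x) \<partial>M) \<le> (\<integral>\<^sup>+x. ennreal c * g x \<partial>M)"
    by (intro nn_integral_mono)
  also have "\<dots> = ennreal c * (\<integral>\<^sup>+x. g x \<partial>M)"
    using g_meas by (rule nn_integral_cmult)
  finally have le: "(\<integral>\<^sup>+x. ennreal (b x * u x) \<partial>M) \<le> ennreal c * (\<integral>\<^sup>+x. g x \<partial>M)" .
  show "integrable M (\<lambda>x. b x * u x)"
    using meas nonneg le fin by (intro integrableI_nonneg) auto
  show "0 \<le> (\<integral>x. b x * u x \<partial>M)"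
    using nonneg by (simp add: integral_nonneg_AE)
  show "(\<integral>x. b x * u x \<partial>M) \<le> enn2real (ennreal c * (\<integral>\<^sup>+x. g x \<partial>M))"
    using meas nonneg le fin by (subst integral_eq_nn_integral) (auto intro: enn2real_mono)
qed

section \<open>The generator applied to \<open>W\<close>\<close>

lemma Wfun_finite:
  assumes "\<eta> \<in> Theta \<epsilon> \<phi> K" and h_le_G: "\<And>x. h x \<le> G_weight \<epsilon> x"
  shows "Wfun h \<phi> K \<eta> < \<infinity>"
proof -
  have "pair_h h \<eta> \<le> (\<Sum>\<^sub>\<infinity>x\<in>\<eta>. ennreal (G_weight \<epsilon> x))"
    unfolding pair_h_def using h_le_G by (intro infsum_mono ennreal_leI) simp_all
  also have "\<dots> < \<infinity>"
    using assms(1) by (simp add: Theta_def GammaG_def)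
  finally show ?thesis
    using assms(1) by (simp add: Wfun_def Theta_def)
qed

lemma W_gain_finite:
  assumes lf: "locally_finite_conf \<eta>" and V: "Vfun \<phi> K \<eta> < \<infinity>"
    and \<phi>_pos: "\<And>y. 0 < \<phi> y" and K_antimono: "\<And>p q. 0 < p \<Longrightarrow> p \<le> q \<Longrightarrow> K q \<le> K p"
  shows "W_gain h \<phi> K \<eta> x < \<infinity>"
proof -
  have \<phi>_nonneg: "0 \<le> \<phi> y" for y
    using \<phi>_pos[of y] by simp
  have slices: "(\<Sum>\<^sub>\<infinity>y\<in>\<eta> - {z}. ennreal (\<phi> y * K (dist z y))) < \<infinity>" if "z \<in> \<eta>" for z
  proof -
    have "ennreal (\<phi> z) * (\<Sum>\<^sub>\<infinity>y\<in>\<eta> - {z}. ennreal (\<phi> y * K (dist z y))) \<le> 2 * Vfun \<phi> K \<eta>"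
      using infsum_psi_slice_le[OF that, of \<phi> K] infsum_psi_eq[where A="\<eta> - {z}" and K=K, of \<phi> z] \<phi>_pos[of z]
      by simp
    also have "\<dots> < \<infinity>"
      using V by (simp add: ennreal_mult_less_top)
    finally show ?thesis
      using \<phi>_pos[of z] by (auto simp: ennreal_mult_less_top)
  qed
  have "(\<Sum>\<^sub>\<infinity>y\<in>\<eta>. ennreal (\<phi> y * K (dist x y))) < \<infinity>"
    by (rule infsum_antimono_kernel_finite[OF lf \<phi>_nonneg K_antimono slices])
  then show ?thesis
    using \<phi>_nonneg[of x] by (simp add: W_gain_def infsum_psi_eq ennreal_mult_less_top)
qed

lemma has_sum_Wfun_remove:
  fixes h \<phi> :: "'a::euclidean_space \<Rightarrow> real" and K :: "real \<Rightarrow> real"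
  defines "F \<equiv> \<lambda>\<xi>. enn2real (Wfun h \<phi> K \<xi>)"
  assumes W: "Wfun h \<phi> K \<eta> < \<infinity>"
  shows "((\<lambda>x. F (\<eta> - {x}) - F \<eta>) has_sum - enn2real (pair_h h \<eta> + 2 * Vfun \<phi> K \<eta>)) \<eta>"
proof -
  have V: "Vfun \<phi> K \<eta> < \<infinity>" and P: "pair_h h \<eta> < \<infinity>"
    using W by (simp_all add: Wfun_def)
  have "((\<lambda>x. enn2real (W_gain h \<phi> K (\<eta> - {x}) x)) has_sum enn2real (pair_h h \<eta> + 2 * Vfun \<phi> K \<eta>)) \<eta>"
    using V P by (intro has_sum_enn2real has_sum_W_gain_remove) (simp_all add: ennreal_mult_less_top)
  then have neg: "((\<lambda>x. - enn2real (W_gain h \<phi> K (\<eta> - {x}) x)) has_sum - enn2real (pair_h h \<eta> + 2 * Vfun \<phi> K \<eta>)) \<eta>"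
    by (rule has_sum_uminusI)
  have diff: "F (\<eta> - {x}) - F \<eta> = - enn2real (W_gain h \<phi> K (\<eta> - {x}) x)" if "x \<in> \<eta>" for x
    using Wfun_remove[OF that, of h \<phi> K] W unfolding F_def by (simp add: enn2real_plus)
  have "?thesis \<longleftrightarrow> ((\<lambda>x. - enn2real (W_gain h \<phi> K (\<eta> - {x}) x))
      has_sum - enn2real (pair_h h \<eta> + 2 * Vfun \<phi> K \<eta>)) \<eta>"
    by (rule has_sum_cong) (rule diff)
  with neg show ?thesis
    by blast
qed

lemma scaled_nn_integral_W_gain_le:
  fixes \<phi> h :: "'a::euclidean_space \<Rightarrow> real"
  assumes A: "countable A" and K_antimono: "\<And>p q. 0 < p \<Longrightarrow> p \<le> q \<Longrightarrow> K q \<le> K p"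
    and \<phi>_meas: "\<phi> \<in> borel_measurable borel" and \<phi>_nonneg: "\<And>y. 0 \<le> \<phi> y"
    and h_meas: "h \<in> borel_measurable borel"
    and C: "\<And>x. (\<integral>\<^sup>+z. ennreal (\<phi> z * K (dist x z)) \<partial>lborel) \<le> ennreal C"
    and nonneg: "0 \<le> C" "0 \<le> c" and h_lower: "\<And>y. c * C * \<phi> y \<le> h y"
  shows "ennreal c * (\<integral>\<^sup>+x. W_gain h \<phi> K A x \<partial>lborel)
    \<le> ennreal c * (\<integral>\<^sup>+x. ennreal (h x) \<partial>lborel) + pair_h h A"
proof -
  have "ennreal c * (ennreal C * (\<Sum>\<^sub>\<infinity>y\<in>A. ennreal (\<phi> y)))
      = (\<Sum>\<^sub>\<infinity>y\<in>A. ennreal c * (ennreal C * ennreal (\<phi> y)))"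
    by (simp add: infsum_cmult_right_ennreal)
  also have "\<dots> = (\<Sum>\<^sub>\<infinity>y\<in>A. ennreal (c * C * \<phi> y))"
    using nonneg \<phi>_nonneg by (intro infsum_cong) (simp add: ennreal_mult mult.assoc)
  also have "\<dots> \<le> pair_h h A"
    unfolding pair_h_def using h_lower by (intro infsum_mono ennreal_leI) simp_all
  finally have "ennreal c * (ennreal C * (\<Sum>\<^sub>\<infinity>y\<in>A. ennreal (\<phi> y))) \<le> pair_h h A" .
  moreover have "ennreal c * (\<integral>\<^sup>+x. W_gain h \<phi> K A x \<partial>lborel)
      \<le> ennreal c * ((\<integral>\<^sup>+x. ennreal (h x) \<partial>lborel) + ennreal C * (\<Sum>\<^sub>\<infinity>y\<in>A. ennreal (\<phi> y)))"
    using nn_integral_W_gain_le[OF A K_antimono \<phi>_meas \<phi>_nonneg h_meas C] by (rule mult_left_mono) simp_all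
  ultimately show ?thesis
    by (simp add: distrib_left add_left_mono order_trans)
qed

lemma integral_Wfun_insert_le:
  fixes b \<phi> h :: "'a::euclidean_space \<Rightarrow> real" and K :: "real \<Rightarrow> real"
  defines "F \<equiv> \<lambda>\<xi>. enn2real (Wfun h \<phi> K \<xi>)"
  assumes \<eta>: "countable \<eta>" and W: "Wfun h \<phi> K \<eta> < \<infinity>" and gain: "\<And>x. W_gain h \<phi> K \<eta> x < \<infinity>"
    and b_meas: "b \<in> borel_measurable lborel" and b: "\<And>x. 0 \<le> b x" "\<And>x. b x \<le> c"
    and K_antimono: "\<And>p q. 0 < p \<Longrightarrow> p \<le> q \<Longrightarrow> K q \<le> K p"
    and \<phi>_meas: "\<phi> \<in> borel_measurable borel" and \<phi>_nonneg: "\<And>y. 0 \<le> \<phi> y"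
    and h_meas: "h \<in> borel_measurable borel" and h_int: "(\<integral>\<^sup>+x. ennreal (h x) \<partial>lborel) < \<infinity>"
    and C: "\<And>x. (\<integral>\<^sup>+z. ennreal (\<phi> z * K (dist x z)) \<partial>lborel) \<le> ennreal C" "0 \<le> C"
    and h_lower: "\<And>y. c * C * \<phi> y \<le> h y"
  shows "integrable lborel (\<lambda>x. b x * (F (insert x \<eta>) - F \<eta>))"
    and "0 \<le> (\<integral>x. b x * (F (insert x \<eta>) - F \<eta>) \<partial>lborel)"
    and "(\<integral>x. b x * (F (insert x \<eta>) - F \<eta>) \<partial>lborel)
      \<le> c * enn2real (\<integral>\<^sup>+x. ennreal (h x) \<partial>lborel) + F \<eta>"
proof -
  define u where "u x = (if x \<in> \<eta> then 0 else enn2real (W_gain h \<phi> K \<eta> x))" for x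
  have u_eq: "F (insert x \<eta>) - F \<eta> = u x" for x
    using W gain[of x] Wfun_insert[of x \<eta> h \<phi> K]
    by (cases "x \<in> \<eta>") (simp_all add: F_def u_def insert_absorb enn2real_plus)
  have gain_meas: "W_gain h \<phi> K \<eta> \<in> borel_measurable lborel"
    by (rule borel_measurable_W_gain[OF \<eta> K_antimono \<phi>_meas h_meas])
  have "\<eta> \<in> sets lborel"
    using countable_imp_null_set_lborel[OF \<eta>] by (simp add: null_sets_def)
  then have u_meas: "u \<in> borel_measurable lborel"
    unfolding u_def[abs_def] using gain_meas by (intro measurable_If_set) auto
  have u: "0 \<le> u x" "ennreal (u x) \<le> W_gain h \<phi> K \<eta> x" for x
    using gain[of x] by (simp_all add: u_def)
  have c: "0 \<le> c"
    using b order_trans by blast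
  have bound: "ennreal c * (\<integral>\<^sup>+x. W_gain h \<phi> K \<eta> x \<partial>lborel)
      \<le> ennreal c * (\<integral>\<^sup>+x. ennreal (h x) \<partial>lborel) + pair_h h \<eta>"
    using \<eta> K_antimono \<phi>_meas \<phi>_nonneg h_meas C c h_lower by (rule scaled_nn_integral_W_gain_le)
  have fin: "ennreal c * (\<integral>\<^sup>+x. ennreal (h x) \<partial>lborel) + pair_h h \<eta> < \<infinity>"
    using h_int W by (simp add: Wfun_def ennreal_mult_less_top)
  note int = integral_mult_bounded_le[OF b_meas u_meas b u gain_meas le_less_trans[OF bound fin]]
  show "integrable lborel (\<lambda>x. b x * (F (insert x \<eta>) - F \<eta>))"
    "0 \<le> (\<integral>x. b x * (F (insert x \<eta>) - F \<eta>) \<partial>lborel)"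
    using int(1,2) by (simp_all add: u_eq)
  have "(\<integral>x. b x * u x \<partial>lborel) \<le> enn2real (ennreal c * (\<integral>\<^sup>+x. W_gain h \<phi> K \<eta> x \<partial>lborel))"
    by (rule int(3))
  also have "\<dots> \<le> enn2real (ennreal c * (\<integral>\<^sup>+x. ennreal (h x) \<partial>lborel) + pair_h h \<eta>)"
    using bound fin by (intro enn2real_mono) auto
  also have "\<dots> \<le> c * enn2real (\<integral>\<^sup>+x. ennreal (h x) \<partial>lborel) + F \<eta>"
    using h_int W c
    by (simp add: F_def Wfun_def enn2real_plus enn2real_mult ennreal_mult_less_top enn2real_mono)
  finally show "(\<integral>x. b x * (F (insert x \<eta>) - F \<eta>) \<partial>lborel)
      \<le> c * enn2real (\<integral>\<^sup>+x. ennreal (h x) \<partial>lborel) + F \<eta>"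
    unfolding u_eq .
qed

lemma birth_rate_section:
  fixes b :: "'a::euclidean_space \<Rightarrow> 'a set \<Rightarrow> real"
  assumes b_meas: "(\<lambda>(x, \<xi>). b x \<xi>) \<in> borel_measurable (lborel \<Otimes>\<^sub>M GammaG_M \<epsilon>)"
    and b_nonneg: "\<And>x \<xi>. \<xi> \<in> GammaG \<epsilon> \<Longrightarrow> b x \<xi> \<ge> 0"
    and b_bdd: "bdd_above ((\<lambda>(x, \<xi>). b x \<xi>) ` (UNIV \<times> GammaG \<epsilon>))"
    and \<eta>: "\<eta> \<in> GammaG \<epsilon>"
  shows "(\<lambda>x. b x \<eta>) \<in> borel_measurable lborel"
    and "0 \<le> b x \<eta>" and "b x \<eta> \<le> (SUP p \<in> UNIV \<times> GammaG \<epsilon>. b (fst p) (snd p))"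
proof -
  have "\<eta> \<in> space (GammaG_M \<epsilon>)"
    using \<eta> by (simp add: GammaG_M_def space_measure_of_conv)
  then have "(\<lambda>x. (x, \<eta>)) \<in> measurable lborel (lborel \<Otimes>\<^sub>M GammaG_M \<epsilon>)"
    by (rule measurable_Pair2')
  from measurable_comp[OF this b_meas] show "(\<lambda>x. b x \<eta>) \<in> borel_measurable lborel"
    by (simp add: o_def)
  show "0 \<le> b x \<eta>"
    using b_nonneg[OF \<eta>] .
  have "(\<lambda>(x, \<xi>). b x \<xi>) = (\<lambda>p. b (fst p) (snd p))"
    by auto
  then show "b x \<eta> \<le> (SUP p \<in> UNIV \<times> GammaG \<epsilon>. b (fst p) (snd p))"
    using b_bdd \<eta> by (metis (no_types, lifting) cSUP_upper UNIV_I mem_Sigma_iff fst_conv snd_conv)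
qed

lemma Lop_Wfun_bound:
  fixes b :: "'a::euclidean_space \<Rightarrow> 'a set \<Rightarrow> real" and \<phi> h :: "'a \<Rightarrow> real" and K :: "real \<Rightarrow> real"
  defines "F \<equiv> \<lambda>\<xi>. enn2real (Wfun h \<phi> K \<xi>)"
  assumes \<eta>: "countable \<eta>" and W: "Wfun h \<phi> K \<eta> < \<infinity>" and gain: "\<And>x. W_gain h \<phi> K \<eta> x < \<infinity>"
    and b_meas: "(\<lambda>x. b x \<eta>) \<in> borel_measurable lborel" and b: "\<And>x. 0 \<le> b x \<eta>" "\<And>x. b x \<eta> \<le> c"
    and K_antimono: "\<And>p q. 0 < p \<Longrightarrow> p \<le> q \<Longrightarrow> K q \<le> K p"
    and \<phi>_meas: "\<phi> \<in> borel_measurable borel" and \<phi>_nonneg: "\<And>y. 0 \<le> \<phi> y"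
    and h_meas: "h \<in> borel_measurable borel" and h_int: "(\<integral>\<^sup>+x. ennreal (h x) \<partial>lborel) < \<infinity>"
    and C: "\<And>x. (\<integral>\<^sup>+z. ennreal (\<phi> z * K (dist x z)) \<partial>lborel) \<le> ennreal C" "0 \<le> C"
    and h_lower: "\<And>y. c * C * \<phi> y \<le> h y"
  shows "Lop_defined b F \<eta>"
    and "\<bar>Lop b F \<eta>\<bar> \<le> c * enn2real (\<integral>\<^sup>+x. ennreal (h x) \<partial>lborel) + 2 * F \<eta>"
proof -
  note removal = has_sum_Wfun_remove[OF W]
  note insertion = integral_Wfun_insert_le[OF \<eta> W gain b_meas b K_antimono \<phi>_meas \<phi>_nonneg h_meas h_int C
      h_lower]
  show "Lop_defined b F \<eta>"
    unfolding Lop_defined_def F_def using removal insertion(1) by (auto simp: summable_on_def)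
  have "enn2real (pair_h h \<eta> + 2 * Vfun \<phi> K \<eta>) \<le> 2 * F \<eta>"
    using W by (simp add: F_def Wfun_def enn2real_plus enn2real_mult ennreal_mult_less_top)
  moreover have "0 \<le> c * enn2real (\<integral>\<^sup>+x. ennreal (h x) \<partial>lborel)"
    using order_trans[OF b] by simp
  ultimately show "\<bar>Lop b F \<eta>\<bar> \<le> c * enn2real (\<integral>\<^sup>+x. ennreal (h x) \<partial>lborel) + 2 * F \<eta>"
    unfolding Lop_def F_def infsumI[OF removal] abs_le_iff
    using insertion(2,3) enn2real_nonneg[of "pair_h h \<eta> + 2 * Vfun \<phi> K \<eta>"] enn2real_nonneg[of "Wfun h \<phi> K \<eta>"]
    by linarith
qed

theorem lemma4p6:
  fixes \<epsilon> :: real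
    and b :: "'a::euclidean_space \<Rightarrow> 'a set \<Rightarrow> real"
    and K :: "real \<Rightarrow> real"
    and \<phi> h :: "'a \<Rightarrow> real"
    and bb C1 :: real
    and \<eta> :: "'a set"
  assumes eps: "\<epsilon> > 0"
    and b_meas: "(\<lambda>(x, \<xi>). b x \<xi>) \<in> borel_measurable (lborel \<Otimes>\<^sub>M GammaG_M \<epsilon>)"
    and b_nonneg: "\<And>x \<xi>. \<xi> \<in> GammaG \<epsilon> \<Longrightarrow> b x \<xi> \<ge> 0"
    and b_bdd: "bdd_above ((\<lambda>(x, \<xi>). b x \<xi>) ` (UNIV \<times> GammaG \<epsilon>))"
    and bb_def: "bb = (SUP p \<in> UNIV \<times> GammaG \<epsilon>. b (fst p) (snd p))"
    and K_pos: "\<And>q. q > 0 \<Longrightarrow> K q > 0"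
    and K_mono: "\<And>p q. 0 < p \<Longrightarrow> p \<le> q \<Longrightarrow> K q \<le> K p"
    and K_lim: "filterlim K at_top (at_right 0)"
    and K_int: "\<And>r. r > 0 \<Longrightarrow>
        (\<integral>\<^sup>+ q. indicator {r..} q * ennreal (K q * q ^ (DIM('a) - 1)) \<partial>lborel) < \<infinity>"
    and phi_meas: "\<phi> \<in> borel_measurable borel"
    and h_meas: "h \<in> borel_measurable borel"
    and phi_pos: "\<And>x. \<phi> x > 0"
    and h_pos: "\<And>x. h x > 0"
    and phi_sep: "\<And>C. compact C \<Longrightarrow> \<exists>c>0. \<forall>x\<in>C. c \<le> \<phi> x"
    and h_sep: "\<And>C. compact C \<Longrightarrow> \<exists>c>0. \<forall>x\<in>C. c \<le> h x"
    and C1_fin: "(SUP x. \<integral>\<^sup>+ y. ennreal (\<phi> y * K (dist x y)) \<partial>lborel) < \<infinity>"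
    and C1_def: "C1 = enn2real (SUP x. \<integral>\<^sup>+ y. ennreal (\<phi> y * K (dist x y)) \<partial>lborel)"
    and h_lower: "\<And>x. 2 * C1 * bb * \<phi> x \<le> h x"
    and h_upper: "\<And>x. h x \<le> G_weight \<epsilon> x"
    and eta: "\<eta> \<in> Theta \<epsilon> \<phi> K"
  shows "(\<integral>\<^sup>+ x. ennreal (h x) \<partial>lborel) < \<infinity>
     \<and> Wfun h \<phi> K \<eta> < \<infinity>
     \<and> (AE x in lborel. Wfun h \<phi> K (insert x \<eta>) < \<infinity>)
     \<and> Lop_defined b (\<lambda>\<xi>. enn2real (Wfun h \<phi> K \<xi>)) \<eta>
     \<and> \<bar>Lop b (\<lambda>\<xi>. enn2real (Wfun h \<phi> K \<xi>)) \<eta>\<bar>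
         \<le> bb * enn2real (\<integral>\<^sup>+ x. ennreal (h x) \<partial>lborel) + 2 * enn2real (Wfun h \<phi> K \<eta>)"
proof -
  have \<eta>_G: "\<eta> \<in> GammaG \<epsilon>" and V: "Vfun \<phi> K \<eta> < \<infinity>" and lf: "locally_finite_conf \<eta>"
    using eta by (simp_all add: Theta_def GammaG_def)
  have b: "(\<lambda>x. b x \<eta>) \<in> borel_measurable lborel" "0 \<le> b x \<eta>" "b x \<eta> \<le> bb" for x
    using birth_rate_section[OF b_meas b_nonneg b_bdd \<eta>_G] by (simp_all add: bb_def)
  have C1: "(\<integral>\<^sup>+y. ennreal (\<phi> y * K (dist x y)) \<partial>lborel) \<le> ennreal C1" "0 \<le> C1" for x
    using C1_fin unfolding C1_def by (auto intro: SUP_upper)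
  have h_lower': "bb * C1 * \<phi> y \<le> h y" for y
  proof -
    have "0 \<le> bb * C1 * \<phi> y"
      using order_trans[OF b(2,3)] C1(2) phi_pos[of y] by simp
    moreover have "2 * C1 * bb * \<phi> y = 2 * (bb * C1 * \<phi> y)"
      by (simp add: mult_ac)
    ultimately show ?thesis
      using h_lower[of y] by linarith
  qed
  have "(\<integral>\<^sup>+x. ennreal (h x) \<partial>lborel) \<le> (\<integral>\<^sup>+x. ennreal (G_weight \<epsilon> (x::'a)) \<partial>lborel)"
    using h_upper by (intro nn_integral_mono ennreal_leI)
  then have h_int: "(\<integral>\<^sup>+x. ennreal (h x) \<partial>lborel) < \<infinity>"
    using nn_integral_G_weight_finite[OF eps] by (rule le_less_trans)
  have W: "Wfun h \<phi> K \<eta> < \<infinity>"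
    using eta h_upper by (rule Wfun_finite)
  have gain: "W_gain h \<phi> K \<eta> x < \<infinity>" for x
    using lf V phi_pos K_mono by (rule W_gain_finite)
  have "Wfun h \<phi> K (insert x \<eta>) < \<infinity>" for x
    using W gain[of x] Wfun_insert[of x \<eta> h \<phi> K] by (cases "x \<in> \<eta>") (simp_all add: insert_absorb)
  moreover note Lop_Wfun_bound[where b=b, OF locally_finite_conf_countable[OF lf] W gain b K_mono phi_meas
      less_imp_le[OF phi_pos] h_meas h_int C1 h_lower']
  ultimately show ?thesis
    using h_int W by simp
qed

end
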